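(* Let $\theta\ge\sigma>0$, $n\geq 1$, $M\ge1$, $\Upsilon>0$. Then $$\epsilon_{\mathrm{a}}^{\star}(n,M,\Upsilon)\;\geq\;\underline{f}\bigl(\tfrac1M,\Upsilon\bigr),$$ where $\underline{f}$ is the lower convex envelope of $f(\beta,\gamma)=\alpha_\beta(\varphi^n_{\sqrt\gamma,\sigma},\varphi^n_{0,\theta})$ on the domain $\beta\in[0,1]$, $\gamma\ge0$.
   Context: $\varphi_{\mu,\sigma}(y)=\frac{1}{\sqrt{2\pi}\sigma}e^{-(y-\mu)^2/(2\sigma^2)}$; $\varphi^n_{\mu,\sigma}$ is the distribution on $\mathbb{R}^n$ of $n$ i.i.d. $\mathcal{N}(\mu,\sigma^2)$ coordinates. $\alpha_\beta(A,B)=\inf\{1-\mathbb{E}_A[T]:\ T\to[0,1],\ \mathbb{E}_B[T]\le\beta\}$. The lower convex envelope $\underline f=f^{**}$ is the biconjugate (double Legendre–Fenchel transform) of $f$, i.e. the largest lower semicontinuous convex function on the domain majorized by $f$. AWGN channel with noise variance $\sigma^2$: input $\mathbf{x}\in\mathbb{R}^n$, output density $\prod_i\varphi_{x_i,\sigma}(y_i)$; for a codebook $\mathcal{C}=\{\mathbf{c}_1,\dots,\mathbf{c}_M\}\subset\mathbb{R}^n$ with uniform message and maximum-likelihood decoding, $P_e(\mathcal{C})$ is the average error probability; $\epsilon_{\mathrm{a}}^{\star}(n,M,\Upsilon)=\inf\{P_e(\mathcal{C}):\frac1M\sum_{i=1}^M\|\mathbf{c}_i\|^2\le n\Upsilon\}$.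 *)

theory Defs
  imports "HOL-Probability.Probability"
begin

(* Points of R^n are represented as functions nat => real; only the coordinates 0..n-1 matter.
   The ambient measurable space is the product space PiM {..<n} (\<lambda>_. lborel). *)

definition gauss_pdf :: "nat \<Rightarrow> (nat \<Rightarrow> real) \<Rightarrow> real \<Rightarrow> (nat \<Rightarrow> real) \<Rightarrow> real" where
  "gauss_pdf n x s y = (\<Prod>k<n. normal_density (x k) s (y k))"

definition gauss_vec :: "nat \<Rightarrow> (nat \<Rightarrow> real) \<Rightarrow> real \<Rightarrow> (nat \<Rightarrow> real) measure" where
  "gauss_vec n x s = density (PiM {..<n} (\<lambda>_. lborel)) (\<lambda>y. ennreal (gauss_pdf n x s y))"

definition gauss_iid :: "nat \<Rightarrow> real \<Rightarrow> real \<Rightarrow> (nat \<Rightarrow> real) measure" where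
  "gauss_iid n mu s = gauss_vec n (\<lambda>_. mu) s"

definition alpha_beta :: "real \<Rightarrow> 'a measure \<Rightarrow> 'a measure \<Rightarrow> real" where
  "alpha_beta \<beta> A B = Inf {1 - (\<integral>y. T y \<partial>A) | T.
       T \<in> borel_measurable A \<and> (\<forall>y \<in> space A. 0 \<le> T y \<and> T y \<le> 1) \<and> (\<integral>y. T y \<partial>B) \<le> \<beta>}"

(* Legendre-Fenchel conjugate of f restricted to domain D \<subseteq> R^2 (f = +\<infinity> outside D) *)
definition conj2 :: "(real \<times> real \<Rightarrow> real) \<Rightarrow> (real \<times> real) set \<Rightarrow> real \<times> real \<Rightarrow> ereal" where
  "conj2 f D a = (SUP y\<in>D. ereal (fst a * fst y + snd a * snd y) - ereal (f y))"

definition lower_convex_env :: "(real \<times> real \<Rightarrow> real) \<Rightarrow> (real \<times> real) set \<Rightarrow> real \<times> real \<Rightarrow> ereal" where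
  "lower_convex_env f D x = (SUP a\<in>UNIV. ereal (fst a * fst x + snd a * snd x) - conj2 f D a)"

definition ml_decoder :: "nat \<Rightarrow> real \<Rightarrow> nat \<Rightarrow> (nat \<Rightarrow> nat \<Rightarrow> real) \<Rightarrow> (nat \<Rightarrow> real) \<Rightarrow> nat" where
  "ml_decoder n s M c y = (LEAST i. i < M \<and> (\<forall>j<M. gauss_pdf n (c j) s y \<le> gauss_pdf n (c i) s y))"

definition awgn_Pe :: "nat \<Rightarrow> real \<Rightarrow> nat \<Rightarrow> (nat \<Rightarrow> nat \<Rightarrow> real) \<Rightarrow> real" where
  "awgn_Pe n s M c = (1 / real M) * (\<Sum>i<M. measure (gauss_vec n (c i) s)
        {y \<in> space (gauss_vec n (c i) s). ml_decoder n s M c y \<noteq> i})"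

definition eps_a_star :: "real \<Rightarrow> nat \<Rightarrow> nat \<Rightarrow> real \<Rightarrow> real" where
  "eps_a_star s n M \<Upsilon> = Inf {awgn_Pe n s M c | c.
      (1 / real M) * (\<Sum>i<M. \<Sum>k<n. (c i k)\<^sup>2) \<le> real n * \<Upsilon>}"

end

theory Submission
  imports Defs
begin

text \<open>
  Fix a code \<open>c\<^sub>1, \<dots>, c\<^sub>M\<close> and an affine minorant \<open>a\<^sub>1\<beta> + a\<^sub>2\<gamma> - C\<close> of \<open>f\<close> on its domain. The
  maximum-likelihood decoding region \<open>E\<^sub>i\<close> of \<open>c\<^sub>i\<close> is a test between the output law \<open>N(c\<^sub>i, \<sigma>\<^sup>2I)\<close>
  and the auxiliary noise-only law \<open>N(0, \<theta>\<^sup>2I)\<close>; since the regions partition the output space,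
  their sizes \<open>\<beta>\<^sub>i\<close> under the latter sum to 1. Both laws are invariant under rotations about the
  origin, so \<open>c\<^sub>i\<close> may be rotated onto the constant vector \<open>(\<surd>\<gamma>\<^sub>i, \<dots>, \<surd>\<gamma>\<^sub>i)\<close> with
  \<open>\<gamma>\<^sub>i = |c\<^sub>i|\<^sup>2/n\<close>; hence the error probability of codeword \<open>i\<close> is at least
  \<open>f(\<beta>\<^sub>i, \<gamma>\<^sub>i) \<ge> a\<^sub>1\<beta>\<^sub>i + a\<^sub>2\<gamma>\<^sub>i - C\<close>. Averaging over \<open>i\<close>, with \<open>\<Sum>\<beta>\<^sub>i = 1\<close>, \<open>\<Sum>\<gamma>\<^sub>i \<le> M\<Upsilon>\<close> and
  \<open>a\<^sub>2 \<le> 0\<close> (forced by \<open>f \<le> 1\<close>), gives \<open>P\<^sub>e \<ge> a\<^sub>1/M + a\<^sub>2\<Upsilon> - C\<close>; the biconjugate is the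
  supremum of all such minorants.

  Rotations are products of Givens rotations, and each Givens rotation is a product of three
  shears; a shear preserves Lebesgue measure by Fubini and translation invariance on the line.
\<close>

abbreviation lborel_Pi :: "nat \<Rightarrow> (nat \<Rightarrow> real) measure" where
  "lborel_Pi n \<equiv> PiM {..<n} (\<lambda>_. lborel)"

interpretation lborel_product: product_sigma_finite "\<lambda>_::nat. lborel :: real measure"
  by standard

lemma gauss_pdf_measurable[measurable]: "gauss_pdf n x s \<in> borel_measurable (lborel_Pi n)"
  unfolding gauss_pdf_def[abs_def] by measurable

lemma sets_gauss_vec[simp, measurable_cong]: "sets (gauss_vec n x s) = sets (lborel_Pi n)"
  by (simp add: gauss_vec_def)

lemma space_gauss_vec[simp]: "space (gauss_vec n x s) = space (lborel_Pi n)"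
  by (simp add: gauss_vec_def)

lemma measurable_gauss_vec_iff: "f \<in> gauss_vec n x s \<rightarrow>\<^sub>M N \<longleftrightarrow> f \<in> lborel_Pi n \<rightarrow>\<^sub>M N"
  by (simp add: measurable_cong_sets[OF sets_gauss_vec refl])

lemma prob_space_gauss_vec:
  assumes "s > 0"
  shows "prob_space (gauss_vec n x s)"
proof
  have normal: "(\<integral>\<^sup>+ y. ennreal (normal_density m s y) \<partial>lborel) = 1" for m
    using prob_space.emeasure_space_1[OF prob_space_normal_density[OF assms]]
    by (simp add: emeasure_density)
  have "emeasure (gauss_vec n x s) (space (gauss_vec n x s)) =
      (\<integral>\<^sup>+ y. (\<Prod>k\<in>{..<n}. ennreal (normal_density (x k) s (y k))) \<partial>lborel_Pi n)"
    unfolding gauss_vec_def gauss_pdf_def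
    by (simp add: emeasure_density prod_ennreal normal_density_nonneg del: space_PiM)
  also have "\<dots> = (\<Prod>k\<in>{..<n}. (\<integral>\<^sup>+ y. ennreal (normal_density (x k) s y) \<partial>lborel))"
    by (rule lborel_product.product_nn_integral_prod) auto
  also have "\<dots> = 1"
    by (simp add: normal)
  finally show "emeasure (gauss_vec n x s) (space (gauss_vec n x s)) = 1" .
qed

lemma gauss_pdf_eq_exp_dist:
  "gauss_pdf n x s y = (1 / sqrt (2 * pi * s\<^sup>2)) ^ n * exp (- (\<Sum>k<n. (y k - x k)\<^sup>2) / (2 * s\<^sup>2))"
proof -
  have "gauss_pdf n x s y = (\<Prod>k<n. (1 / sqrt (2 * pi * s\<^sup>2)) * exp (- (y k - x k)\<^sup>2 / (2 * s\<^sup>2)))"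
    unfolding gauss_pdf_def normal_density_def by simp
  also have "\<dots> = (1 / sqrt (2 * pi * s\<^sup>2)) ^ n * (\<Prod>k<n. exp (- (y k - x k)\<^sup>2 / (2 * s\<^sup>2)))"
    by (subst prod.distrib) simp
  also have "(\<Prod>k<n. exp (- (y k - x k)\<^sup>2 / (2 * s\<^sup>2))) = exp (\<Sum>k<n. - (y k - x k)\<^sup>2 / (2 * s\<^sup>2))"
    by (simp add: exp_sum)
  also have "(\<Sum>k<n. - (y k - x k)\<^sup>2 / (2 * s\<^sup>2)) = - (\<Sum>k<n. (y k - x k)\<^sup>2) / (2 * s\<^sup>2)"
    by (simp add: sum_divide_distrib sum_negf)
  finally show ?thesis .
qed

lemma gauss_vec_cong:
  assumes "\<forall>i<n. x i = x' i"
  shows "gauss_vec n x s = gauss_vec n x' s"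
proof -
  have "gauss_pdf n x s = gauss_pdf n x' s"
    using assms by (auto simp: gauss_pdf_def fun_eq_iff intro!: prod.cong)
  then show ?thesis by (simp add: gauss_vec_def)
qed

section \<open>Shears and rotations preserve Lebesgue measure\<close>

definition lborel_Pi_preserving :: "nat \<Rightarrow> ((nat \<Rightarrow> real) \<Rightarrow> nat \<Rightarrow> real) \<Rightarrow> bool" where
  "lborel_Pi_preserving n F \<longleftrightarrow> F \<in> lborel_Pi n \<rightarrow>\<^sub>M lborel_Pi n \<and>
     (\<forall>g \<in> borel_measurable (lborel_Pi n). (\<integral>\<^sup>+ y. g (F y) \<partial>lborel_Pi n) = (\<integral>\<^sup>+ y. g y \<partial>lborel_Pi n))"

lemma lborel_Pi_preserving_nn_integral:
  assumes "lborel_Pi_preserving n F" and "g \<in> borel_measurable (lborel_Pi n)"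
  shows "(\<integral>\<^sup>+ y. g (F y) \<partial>lborel_Pi n) = (\<integral>\<^sup>+ y. g y \<partial>lborel_Pi n)"
  using assms unfolding lborel_Pi_preserving_def by blast

lemma lborel_Pi_preserving_measurable:
  "lborel_Pi_preserving n F \<Longrightarrow> F \<in> lborel_Pi n \<rightarrow>\<^sub>M lborel_Pi n"
  unfolding lborel_Pi_preserving_def by blast

lemma lborel_Pi_preserving_comp:
  assumes F: "lborel_Pi_preserving n F" and G: "lborel_Pi_preserving n G"
  shows "lborel_Pi_preserving n (F \<circ> G)"
  unfolding lborel_Pi_preserving_def
proof (intro conjI ballI)
  note [measurable] = lborel_Pi_preserving_measurable[OF F] lborel_Pi_preserving_measurable[OF G]
  show "F \<circ> G \<in> lborel_Pi n \<rightarrow>\<^sub>M lborel_Pi n" by measurable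
  fix g :: "_ \<Rightarrow> ennreal" assume [measurable]: "g \<in> borel_measurable (lborel_Pi n)"
  have "(\<lambda>y. g (F y)) \<in> borel_measurable (lborel_Pi n)" by measurable
  then have "(\<integral>\<^sup>+ y. g (F (G y)) \<partial>lborel_Pi n) = (\<integral>\<^sup>+ y. g (F y) \<partial>lborel_Pi n)"
    by (rule lborel_Pi_preserving_nn_integral[OF G])
  also have "\<dots> = (\<integral>\<^sup>+ y. g y \<partial>lborel_Pi n)"
    by (rule lborel_Pi_preserving_nn_integral[OF F]) measurable
  finally show "(\<integral>\<^sup>+ y. g ((F \<circ> G) y) \<partial>lborel_Pi n) = (\<integral>\<^sup>+ y. g y \<partial>lborel_Pi n)" by simp
qed

definition shear :: "nat \<Rightarrow> nat \<Rightarrow> real \<Rightarrow> real \<Rightarrow> (nat \<Rightarrow> real) \<Rightarrow> nat \<Rightarrow> real" where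
  "shear j k u t y = y(j := u * y j + t * y k)"

lemma measurable_shear[measurable]:
  assumes "j < n" "k < n"
  shows "shear j k u t \<in> lborel_Pi n \<rightarrow>\<^sub>M lborel_Pi n"
proof -
  have eq: "shear j k u t = (\<lambda>y i. if i = j then u * y j + t * y k else y i)"
    by (auto simp: shear_def fun_eq_iff)
  show ?thesis unfolding eq
  proof (rule measurable_PiM_single')
    fix i assume "i \<in> {..<n}"
    then show "(\<lambda>y. if i = j then u * y j + t * y k else y i) \<in> lborel_Pi n \<rightarrow>\<^sub>M lborel"
      using assms by (cases "i = j") (simp_all, measurable)
  qed (use assms in \<open>auto simp: space_PiM PiE_iff extensional_def\<close>)
qed

text \<open>The shear acts on coordinate \<open>j\<close> alone, as the map \<open>a \<mapsto> t y\<^sub>k + u a\<close> of the line; integrate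
  over that coordinate first.\<close>

lemma lborel_Pi_preserving_shear:
  assumes jk: "j < n" "k < n" "j \<noteq> k \<or> t = 0" and u: "u = 1 \<or> u = -1"
  shows "lborel_Pi_preserving n (shear j k u t)"
  unfolding lborel_Pi_preserving_def
proof (intro conjI ballI)
  show "shear j k u t \<in> lborel_Pi n \<rightarrow>\<^sub>M lborel_Pi n" using jk by measurable
  fix g :: "_ \<Rightarrow> ennreal" assume g: "g \<in> borel_measurable (lborel_Pi n)"
  have "\<bar>u\<bar> = 1" using u by auto
  define I where "I = {..<n} - {j}"
  have I: "{..<n} = insert j I" "finite I" "j \<notin> I" using jk by (auto simp: I_def)
  have gm: "g \<in> borel_measurable (PiM (insert j I) (\<lambda>_. lborel))" using g I by simp
  have gsm: "(\<lambda>y. g (shear j k u t y)) \<in> borel_measurable (PiM (insert j I) (\<lambda>_. lborel))"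
    using measurable_comp[OF measurable_shear[OF jk(1,2)] g] I by (simp add: comp_def)
  have "(\<integral>\<^sup>+ y. g (shear j k u t y) \<partial>lborel_Pi n) =
      (\<integral>\<^sup>+ x. (\<integral>\<^sup>+ a. g (shear j k u t (x(j := a))) \<partial>lborel) \<partial>PiM I (\<lambda>_. lborel :: real measure))"
    unfolding I(1) by (rule lborel_product.product_nn_integral_insert[OF I(2,3) gsm])
  also have "\<dots> = (\<integral>\<^sup>+ x. (\<integral>\<^sup>+ a. g (x(j := a)) \<partial>lborel) \<partial>PiM I (\<lambda>_. lborel :: real measure))"
  proof (rule nn_integral_cong)
    fix x assume x: "x \<in> space (PiM I (\<lambda>_. lborel :: real measure))"
    have "(\<lambda>a. g (x(j := a))) \<in> borel_measurable borel"
      using measurable_comp[OF measurable_component_update[OF x I(3)] gm] by (simp add: comp_def)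
    then have "(\<integral>\<^sup>+ a. g (x(j := a)) \<partial>lborel) = ennreal \<bar>u\<bar> * (\<integral>\<^sup>+ a. g (x(j := t * x k + u * a)) \<partial>lborel)"
      using u by (intro nn_integral_real_affine) auto
    also have "\<dots> = (\<integral>\<^sup>+ a. g (shear j k u t (x(j := a))) \<partial>lborel)"
      using jk \<open>\<bar>u\<bar> = 1\<close> by (cases "k = j") (simp_all add: shear_def algebra_simps)
    finally show "(\<integral>\<^sup>+ a. g (shear j k u t (x(j := a))) \<partial>lborel) = (\<integral>\<^sup>+ a. g (x(j := a)) \<partial>lborel)"
      by simp
  qed
  also have "\<dots> = (\<integral>\<^sup>+ y. g y \<partial>lborel_Pi n)"
    unfolding I(1) by (rule lborel_product.product_nn_integral_insert[OF I(2,3) gm, symmetric])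
  finally show "(\<integral>\<^sup>+ y. g (shear j k u t y) \<partial>lborel_Pi n) = (\<integral>\<^sup>+ y. g y \<partial>lborel_Pi n)" .
qed

definition givens :: "nat \<Rightarrow> nat \<Rightarrow> real \<Rightarrow> real \<Rightarrow> (nat \<Rightarrow> real) \<Rightarrow> nat \<Rightarrow> real" where
  "givens j k p q y = y(j := p * y j - q * y k, k := q * y j + p * y k)"

lemma givens_eq_shears:
  assumes "j \<noteq> k" and "q \<noteq> 0" and pq: "p\<^sup>2 + q\<^sup>2 = 1"
  shows "givens j k p q = shear j k 1 ((p - 1) / q) \<circ> shear k j 1 q \<circ> shear j k 1 ((p - 1) / q)"
proof
  fix y
  define s where "s = (p - 1) / q"
  have s1: "1 + s * q = p"
    using \<open>q \<noteq> 0\<close> by (simp add: s_def field_simps)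
  have q_unit: "q * (p * p + q * q) = q"
    using pq by (simp add: power2_eq_square)
  have s2: "s + s * (1 + q * s) = - q"
    using \<open>q \<noteq> 0\<close> by (simp add: s_def field_simps) (insert q_unit, simp add: algebra_simps)
  have "y j + s * y k + s * (y k + q * (y j + s * y k)) = (1 + s * q) * y j + (s + s * (1 + q * s)) * y k"
    by (simp add: algebra_simps)
  also have "\<dots> = p * y j - q * y k"
    using s1 s2 by simp
  finally have "y j + s * y k + s * (y k + q * (y j + s * y k)) = p * y j - q * y k" .
  moreover have "y k + q * (y j + s * y k) = q * y j + (1 + s * q) * y k"
    by (simp add: algebra_simps)
  ultimately show "givens j k p q y = (shear j k 1 s \<circ> shear k j 1 q \<circ> shear j k 1 s) y"
    using s1 \<open>j \<noteq> k\<close> by (simp add: givens_def shear_def fun_eq_iff)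
qed

lemma lborel_Pi_preserving_givens:
  assumes jk: "j < n" "k < n" "j \<noteq> k" and pq: "p\<^sup>2 + q\<^sup>2 = 1"
  shows "lborel_Pi_preserving n (givens j k p q)"
proof (cases "q = 0")
  case True
  then have "p = 1 \<or> p = -1" using pq by (simp add: power2_eq_1_iff)
  then show ?thesis
  proof
    assume "p = 1"
    then have "givens j k p q = shear j k 1 0"
      using True by (auto simp: givens_def shear_def fun_eq_iff)
    then show ?thesis using lborel_Pi_preserving_shear[OF jk(1,2)] by simp
  next
    assume "p = -1"
    then have "givens j k p q = shear j k (-1) 0 \<circ> shear k j (-1) 0"
      using True jk by (auto simp: givens_def shear_def fun_eq_iff)
    then show ?thesis
      using lborel_Pi_preserving_comp lborel_Pi_preserving_shear jk by simp
  qed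
next
  case False
  then show ?thesis
    using givens_eq_shears[OF jk(3) False pq] lborel_Pi_preserving_comp lborel_Pi_preserving_shear jk
    by simp
qed

section \<open>Orthogonal maps act transitively on spheres\<close>

text \<open>The locality
  clause lets an orthogonal map act on points outside \<open>space (lborel_Pi n)\<close>, such as the constant
  mean vectors of \<open>gauss_iid\<close>.\<close>

definition orthogonal_Pi :: "nat \<Rightarrow> ((nat \<Rightarrow> real) \<Rightarrow> nat \<Rightarrow> real) \<Rightarrow> bool" where
  "orthogonal_Pi n F \<longleftrightarrow> lborel_Pi_preserving n F \<and>
     (\<forall>y v. (\<Sum>i<n. (F y i - F v i)\<^sup>2) = (\<Sum>i<n. (y i - v i)\<^sup>2)) \<and>
     (\<forall>y y'. (\<forall>i<n. y i = y' i) \<longrightarrow> (\<forall>i<n. F y i = F y' i)) \<and>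
     (\<forall>i<n. F (\<lambda>_. 0) i = 0)"

lemma
  assumes "orthogonal_Pi n F"
  shows orthogonal_Pi_preserving: "lborel_Pi_preserving n F"
    and orthogonal_Pi_dist: "(\<Sum>i<n. (F y i - F v i)\<^sup>2) = (\<Sum>i<n. (y i - v i)\<^sup>2)"
    and orthogonal_Pi_local: "\<forall>i<n. y i = y' i \<Longrightarrow> \<forall>i<n. F y i = F y' i"
    and orthogonal_Pi_origin: "\<forall>i<n. F (\<lambda>_. 0) i = 0"
  using assms unfolding orthogonal_Pi_def by blast+

lemma orthogonal_Pi_comp:
  assumes F: "orthogonal_Pi n F" and G: "orthogonal_Pi n G"
  shows "orthogonal_Pi n (F \<circ> G)"
  unfolding orthogonal_Pi_def
proof (intro conjI)
  show "lborel_Pi_preserving n (F \<circ> G)"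
    by (intro lborel_Pi_preserving_comp orthogonal_Pi_preserving F G)
  show "\<forall>y v. (\<Sum>i<n. ((F \<circ> G) y i - (F \<circ> G) v i)\<^sup>2) = (\<Sum>i<n. (y i - v i)\<^sup>2)"
    by (simp add: orthogonal_Pi_dist[OF F] orthogonal_Pi_dist[OF G])
  show "\<forall>y y'. (\<forall>i<n. y i = y' i) \<longrightarrow> (\<forall>i<n. (F \<circ> G) y i = (F \<circ> G) y' i)"
    using orthogonal_Pi_local[OF F orthogonal_Pi_local[OF G]] by simp
  have "\<forall>i<n. F (G (\<lambda>_. 0)) i = F (\<lambda>_. 0) i"
    by (rule orthogonal_Pi_local[OF F orthogonal_Pi_origin[OF G]])
  then show "\<forall>i<n. (F \<circ> G) (\<lambda>_. 0) i = 0"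
    using orthogonal_Pi_origin[OF F] by simp
qed

lemma sum_lessThan_split_two:
  fixes f :: "nat \<Rightarrow> 'a :: comm_monoid_add"
  assumes "j < n" "k < n" "j \<noteq> k"
  shows "(\<Sum>i<n. f i) = f j + f k + (\<Sum>i\<in>{..<n} - {j, k}. f i)"
proof -
  have "(\<Sum>i<n. f i) = f j + (\<Sum>i\<in>{..<n} - {j}. f i)"
    using assms by (intro sum.remove) auto
  also have "(\<Sum>i\<in>{..<n} - {j}. f i) = f k + (\<Sum>i\<in>{..<n} - {j} - {k}. f i)"
    using assms by (intro sum.remove) auto
  also have "{..<n} - {j} - {k} = {..<n} - {j, k}" by auto
  finally show ?thesis by (simp add: add.assoc)
qed

lemma orthogonal_Pi_givens:
  assumes jk: "j < n" "k < n" "j \<noteq> k" and pq: "p\<^sup>2 + q\<^sup>2 = 1"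
  shows "orthogonal_Pi n (givens j k p q)"
proof -
  have "(\<Sum>i<n. (givens j k p q y i - givens j k p q v i)\<^sup>2) = (\<Sum>i<n. (y i - v i)\<^sup>2)" for y v
  proof -
    define a b where "a = y j - v j" and "b = y k - v k"
    have "(p * a - q * b)\<^sup>2 + (q * a + p * b)\<^sup>2 = (p\<^sup>2 + q\<^sup>2) * (a\<^sup>2 + b\<^sup>2)"
      by (simp add: power2_eq_square algebra_simps)
    moreover have "(\<Sum>i\<in>{..<n} - {j, k}. (givens j k p q y i - givens j k p q v i)\<^sup>2) =
        (\<Sum>i\<in>{..<n} - {j, k}. (y i - v i)\<^sup>2)"
      by (rule sum.cong) (auto simp: givens_def)
    ultimately show ?thesis
      using jk pq by (simp add: sum_lessThan_split_two[OF jk] givens_def a_def b_def algebra_simps)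
  qed
  then show ?thesis
    using lborel_Pi_preserving_givens[OF assms] jk unfolding orthogonal_Pi_def by (auto simp: givens_def)
qed

lemma orthogonal_Pi_reflection:
  assumes j: "j < n" and u: "u = 1 \<or> u = -1"
  shows "orthogonal_Pi n (shear j j u 0)"
proof -
  have "(\<Sum>i<n. (shear j j u 0 y i - shear j j u 0 v i)\<^sup>2) = (\<Sum>i<n. (y i - v i)\<^sup>2)" for y v
    using u by (intro sum.cong) (auto simp: shear_def power2_eq_square algebra_simps)
  then show ?thesis
    using lborel_Pi_preserving_shear[OF j j _ u] unfolding orthogonal_Pi_def by (auto simp: shear_def)
qed

definition orth_maps_to :: "nat \<Rightarrow> (nat \<Rightarrow> real) \<Rightarrow> (nat \<Rightarrow> real) \<Rightarrow> bool" where
  "orth_maps_to n v w \<longleftrightarrow> (\<exists>F. orthogonal_Pi n F \<and> (\<forall>i<n. F v i = w i))"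

lemma orth_maps_to_trans:
  assumes "orth_maps_to n u v" and "orth_maps_to n v w"
  shows "orth_maps_to n u w"
proof -
  obtain F where F: "orthogonal_Pi n F" "\<forall>i<n. F u i = v i" using assms(1) by (auto simp: orth_maps_to_def)
  obtain G where G: "orthogonal_Pi n G" "\<forall>i<n. G v i = w i" using assms(2) by (auto simp: orth_maps_to_def)
  have "\<forall>i<n. G (F u) i = w i" using orthogonal_Pi_local[OF G(1) F(2)] G(2) by simp
  then show ?thesis using orthogonal_Pi_comp[OF G(1) F(1)] by (auto simp: orth_maps_to_def)
qed

lemma orth_maps_to_cong:
  assumes "orth_maps_to n v w" and "\<forall>i<n. v i = v' i"
  shows "orth_maps_to n v' w"
  using assms orthogonal_Pi_local unfolding orth_maps_to_def by metis

lemma orth_maps_to_reflection: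
  assumes j: "j < n" and sq: "(v j)\<^sup>2 = (w j)\<^sup>2" and others: "\<forall>i<n. i \<noteq> j \<longrightarrow> v i = w i"
  shows "orth_maps_to n v w"
proof -
  obtain u where u: "u = 1 \<or> u = -1" "w j = u * v j"
    using sq by (metis power2_eq_iff mult_1 mult_minus1)
  have "\<forall>i<n. shear j j u 0 v i = w i" using u others by (auto simp: shear_def)
  then show ?thesis using orthogonal_Pi_reflection[OF j u(1)] unfolding orth_maps_to_def by blast
qed

lemma plane_rotation_exists:
  fixes a b a' b' :: real
  assumes "a\<^sup>2 + b\<^sup>2 = a'\<^sup>2 + b'\<^sup>2"
  obtains p q where "p\<^sup>2 + q\<^sup>2 = 1" "p * a - q * b = a'" "q * a + p * b = b'"
proof (cases "a\<^sup>2 + b\<^sup>2 = 0")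
  case True
  then have "a = 0" "b = 0" "a' = 0" "b' = 0" using assms by (auto simp: sum_power2_eq_zero_iff)
  then show ?thesis using that[of 1 0] by simp
next
  case False
  define r where "r = a\<^sup>2 + b\<^sup>2"
  have r: "r \<noteq> 0" "a'\<^sup>2 + b'\<^sup>2 = r" using False assms by (simp_all add: r_def)
  define p q where "p = (a * a' + b * b') / r" and "q = (a * b' - b * a') / r"
  have "(a * a' + b * b')\<^sup>2 + (a * b' - b * a')\<^sup>2 = (a\<^sup>2 + b\<^sup>2) * (a'\<^sup>2 + b'\<^sup>2)"
    by (simp add: power2_eq_square algebra_simps)
  then have "p\<^sup>2 + q\<^sup>2 = 1"
    using r by (simp add: p_def q_def r_def power_divide add_divide_distrib[symmetric] power2_eq_square)
  moreover have "p * a - q * b = (a' * (a\<^sup>2 + b\<^sup>2)) / r"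
    using r(1) by (simp add: p_def q_def field_simps power2_eq_square)
  moreover have "q * a + p * b = (b' * (a\<^sup>2 + b\<^sup>2)) / r"
    using r(1) by (simp add: p_def q_def field_simps power2_eq_square)
  moreover have "a\<^sup>2 + b\<^sup>2 = r" by (simp add: r_def)
  ultimately show ?thesis using r(1) that by simp
qed

lemma orth_maps_to_givens:
  assumes jk: "j < n" "k < n" "j \<noteq> k"
    and sq: "(v j)\<^sup>2 + (v k)\<^sup>2 = (w j)\<^sup>2 + (w k)\<^sup>2"
    and others: "\<forall>i<n. i \<noteq> j \<longrightarrow> i \<noteq> k \<longrightarrow> v i = w i"
  shows "orth_maps_to n v w"
proof -
  obtain p q where pq: "p\<^sup>2 + q\<^sup>2 = 1" "p * v j - q * v k = w j" "q * v j + p * v k = w k"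
    using plane_rotation_exists[OF sq] .
  have "\<forall>i<n. givens j k p q v i = w i" using pq(2,3) others jk by (auto simp: givens_def)
  then show ?thesis using orthogonal_Pi_givens[OF jk pq(1)] unfolding orth_maps_to_def by blast
qed

text \<open>\<open>collapse v m\<close> moves the mass of coordinates \<open>0..m\<close> into coordinate 0; each step from \<open>m\<close> to
  \<open>m + 1\<close> is a Givens rotation in the plane of coordinates \<open>0\<close> and \<open>m + 1\<close>.\<close>

definition collapse :: "(nat \<Rightarrow> real) \<Rightarrow> nat \<Rightarrow> nat \<Rightarrow> real" where
  "collapse v m = (\<lambda>i. if i = 0 then sqrt (\<Sum>l\<le>m. (v l)\<^sup>2) else if i \<le> m then 0 else v i)"

lemma orth_maps_to_collapse:
  assumes "m < n"
  shows "orth_maps_to n v (collapse v m) \<and> orth_maps_to n (collapse v m) v"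
  using assms
proof (induction m)
  case 0
  have "(v 0)\<^sup>2 = (collapse v 0 0)\<^sup>2" "\<forall>i<n. i \<noteq> 0 \<longrightarrow> v i = collapse v 0 i"
    by (simp_all add: collapse_def)
  then show ?case using orth_maps_to_reflection[OF "0.prems"] by (metis (no_types, lifting))
next
  case (Suc m)
  have jk: "0 < n" "Suc m < n" "0 \<noteq> Suc m" using Suc.prems by auto
  have "0 \<le> (\<Sum>l\<le>m. (v l)\<^sup>2)" by (simp add: sum_nonneg)
  then have sq: "(collapse v m 0)\<^sup>2 + (collapse v m (Suc m))\<^sup>2 =
      (collapse v (Suc m) 0)\<^sup>2 + (collapse v (Suc m) (Suc m))\<^sup>2"
    by (simp add: collapse_def add_nonneg_nonneg)
  have others: "\<forall>i<n. i \<noteq> 0 \<longrightarrow> i \<noteq> Suc m \<longrightarrow> collapse v m i = collapse v (Suc m) i"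
    by (auto simp: collapse_def le_Suc_eq)
  have "orth_maps_to n (collapse v m) (collapse v (Suc m))"
    by (rule orth_maps_to_givens[OF jk sq others])
  moreover have "orth_maps_to n (collapse v (Suc m)) (collapse v m)"
    using others by (intro orth_maps_to_givens[OF jk sq[symmetric]]) auto
  ultimately show ?case using Suc orth_maps_to_trans by (meson Suc_lessD)
qed

lemma orth_maps_to_if_norm_eq:
  assumes "n \<ge> 1" and "(\<Sum>i<n. (v i)\<^sup>2) = (\<Sum>i<n. (w i)\<^sup>2)"
  shows "orth_maps_to n v w"
proof -
  have m: "n - 1 < n" "{..n - 1} = {..<n}" using assms(1) by auto
  then have "\<forall>i<n. collapse w (n - 1) i = collapse v (n - 1) i"
    using assms(2) by (auto simp: collapse_def)
  then have "orth_maps_to n (collapse v (n - 1)) w"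
    using orth_maps_to_cong orth_maps_to_collapse[OF m(1)] by blast
  then show ?thesis
    using orth_maps_to_trans orth_maps_to_collapse[OF m(1)] by blast
qed

section \<open>Rotation invariance of Gaussian vectors\<close>

lemma gauss_pdf_orthogonal:
  assumes "orthogonal_Pi n F"
  shows "gauss_pdf n (F v) s (F y) = gauss_pdf n v s y"
  unfolding gauss_pdf_eq_exp_dist orthogonal_Pi_dist[OF assms] ..

lemma distr_gauss_vec_orthogonal:
  assumes F: "orthogonal_Pi n F"
  shows "distr (gauss_vec n v s) (lborel_Pi n) F = gauss_vec n (F v) s"
proof (rule measure_eqI)
  note [measurable] = lborel_Pi_preserving_measurable[OF orthogonal_Pi_preserving[OF F]]
  show "sets (distr (gauss_vec n v s) (lborel_Pi n) F) = sets (gauss_vec n (F v) s)" by simp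
  fix A assume "A \<in> sets (distr (gauss_vec n v s) (lborel_Pi n) F)"
  then have [measurable]: "A \<in> sets (lborel_Pi n)" by simp
  have "emeasure (distr (gauss_vec n v s) (lborel_Pi n) F) A =
      (\<integral>\<^sup>+ y. ennreal (gauss_pdf n v s y) * indicator (F -` A \<inter> space (lborel_Pi n)) y \<partial>lborel_Pi n)"
    by (simp add: emeasure_distr measurable_gauss_vec_iff gauss_vec_def emeasure_density del: space_PiM)
  also have "\<dots> = (\<integral>\<^sup>+ y. ennreal (gauss_pdf n (F v) s (F y)) * indicator A (F y) \<partial>lborel_Pi n)"
    using gauss_pdf_orthogonal[OF F] by (intro nn_integral_cong) (auto simp: indicator_def)
  also have "\<dots> = (\<integral>\<^sup>+ z. ennreal (gauss_pdf n (F v) s z) * indicator A z \<partial>lborel_Pi n)"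
    by (intro lborel_Pi_preserving_nn_integral orthogonal_Pi_preserving F) measurable
  also have "\<dots> = emeasure (gauss_vec n (F v) s) A"
    by (simp add: gauss_vec_def emeasure_density del: space_PiM)
  finally show "emeasure (distr (gauss_vec n v s) (lborel_Pi n) F) A = emeasure (gauss_vec n (F v) s) A" .
qed

lemma integral_gauss_vec_orthogonal:
  fixes T :: "(nat \<Rightarrow> real) \<Rightarrow> real"
  assumes F: "orthogonal_Pi n F" and Fv: "\<forall>i<n. F v i = w i"
    and T: "T \<in> borel_measurable (lborel_Pi n)"
  shows "(\<integral>y. T (F y) \<partial>gauss_vec n v s) = (\<integral>y. T y \<partial>gauss_vec n w s)"
proof -
  have "F \<in> gauss_vec n v s \<rightarrow>\<^sub>M lborel_Pi n"
    using lborel_Pi_preserving_measurable[OF orthogonal_Pi_preserving[OF F]]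
    by (simp add: measurable_gauss_vec_iff)
  then have "(\<integral>y. T (F y) \<partial>gauss_vec n v s) = integral\<^sup>L (distr (gauss_vec n v s) (lborel_Pi n) F) T"
    using T by (simp add: integral_distr)
  then show ?thesis
    unfolding distr_gauss_vec_orthogonal[OF F] using gauss_vec_cong[OF Fv] by simp
qed

section \<open>Tests and the function \<open>\<alpha>\<^sub>\<beta>\<close>\<close>

lemma alpha_beta_le:
  fixes T :: "'a \<Rightarrow> real"
  assumes "prob_space A" and T: "T \<in> borel_measurable A" "\<forall>y\<in>space A. 0 \<le> T y \<and> T y \<le> 1"
    and "(\<integral>y. T y \<partial>B) \<le> \<beta>"
  shows "alpha_beta \<beta> A B \<le> 1 - (\<integral>y. T y \<partial>A)"
  unfolding alpha_beta_def
proof (rule cInf_lower)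
  show "1 - (\<integral>y. T y \<partial>A) \<in> {1 - (\<integral>y. T y \<partial>A) | T.
      T \<in> borel_measurable A \<and> (\<forall>y \<in> space A. 0 \<le> T y \<and> T y \<le> 1) \<and> (\<integral>y. T y \<partial>B) \<le> \<beta>}"
    using assms by blast
  interpret prob_space A by fact
  have "(\<integral>y. T' y \<partial>A) \<le> 1"
    if "T' \<in> borel_measurable A" "\<forall>y\<in>space A. 0 \<le> T' y \<and> T' y \<le> 1" for T' :: "'a \<Rightarrow> real"
  proof -
    have "integrable A T'"
      using that by (intro integrable_const_bound[where B=1]) (auto intro!: AE_I2)
    then have "(\<integral>y. T' y \<partial>A) \<le> (\<integral>y. 1 \<partial>A)"
      using that by (intro integral_mono) auto
    then show ?thesis by (simp add: prob_space)
  qed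
  then show "bdd_below {1 - (\<integral>y. T y \<partial>A) | T.
      T \<in> borel_measurable A \<and> (\<forall>y \<in> space A. 0 \<le> T y \<and> T y \<le> 1) \<and> (\<integral>y. T y \<partial>B) \<le> \<beta>}"
    by (intro bdd_belowI[where m=0]) fastforce
qed

lemma alpha_beta_le_1:
  assumes "prob_space A" and "0 \<le> \<beta>"
  shows "alpha_beta \<beta> A B \<le> 1"
  using alpha_beta_le[OF assms(1), of "\<lambda>_. 0"] assms(2) by simp

text \<open>An orthogonal map taking \<open>(\<surd>\<gamma>, \<dots>, \<surd>\<gamma>)\<close> to \<open>c\<close> fixes \<open>N(0, \<theta>\<^sup>2I)\<close>, so pulling back the
  test \<open>E\<close> along it preserves both of its probabilities.\<close>

lemma alpha_beta_gauss_iid_le: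
  assumes "\<sigma> > 0" and "n \<ge> 1" and "0 \<le> \<gamma>" and norm: "(\<Sum>k<n. (c k)\<^sup>2) = real n * \<gamma>"
    and E[measurable]: "E \<in> sets (lborel_Pi n)"
  shows "alpha_beta (measure (gauss_iid n 0 \<theta>) E) (gauss_iid n (sqrt \<gamma>) \<sigma>) (gauss_iid n 0 \<theta>)
    \<le> 1 - measure (gauss_vec n c \<sigma>) E"
proof -
  have "(\<Sum>k<n. (sqrt \<gamma>)\<^sup>2) = (\<Sum>k<n. (c k)\<^sup>2)" using norm \<open>0 \<le> \<gamma>\<close> by simp
  then have "orth_maps_to n (\<lambda>_. sqrt \<gamma>) c"
    by (rule orth_maps_to_if_norm_eq[OF \<open>n \<ge> 1\<close>])
  then obtain F where F: "orthogonal_Pi n F" "\<forall>k<n. F (\<lambda>_. sqrt \<gamma>) k = c k"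
    unfolding orth_maps_to_def by blast
  note [measurable] = lborel_Pi_preserving_measurable[OF orthogonal_Pi_preserving[OF F(1)]]
  have E_sub: "E \<inter> space (lborel_Pi n) = E" using sets.sets_into_space[OF E] by blast
  have transport: "(\<integral>y. indicator E (F y) \<partial>gauss_vec n v s) = measure (gauss_vec n w s) E"
    if "\<forall>k<n. F v k = w k" for v w s
    using integral_gauss_vec_orthogonal[OF F(1) that, of "indicator E"] E_sub by simp
  have T: "(\<lambda>y. indicator E (F y) :: real) \<in> borel_measurable (gauss_vec n (\<lambda>_. sqrt \<gamma>) \<sigma>)"
    unfolding measurable_gauss_vec_iff by measurable
  have "alpha_beta (measure (gauss_iid n 0 \<theta>) E) (gauss_iid n (sqrt \<gamma>) \<sigma>) (gauss_iid n 0 \<theta>)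
      \<le> 1 - (\<integral>y. indicator E (F y) \<partial>gauss_iid n (sqrt \<gamma>) \<sigma>)"
    unfolding gauss_iid_def
  proof (rule alpha_beta_le[OF prob_space_gauss_vec[OF \<open>\<sigma> > 0\<close>] T])
    show "\<forall>y\<in>space (gauss_vec n (\<lambda>_. sqrt \<gamma>) \<sigma>).
        (0::real) \<le> indicator E (F y) \<and> indicator E (F y) \<le> (1::real)"
      by (simp add: indicator_def)
    show "(\<integral>y. indicator E (F y) \<partial>gauss_vec n (\<lambda>_. 0) \<theta>) \<le> measure (gauss_vec n (\<lambda>_. 0) \<theta>) E"
      using transport[OF orthogonal_Pi_origin[OF F(1)]] by simp
  qed
  then show ?thesis
    unfolding gauss_iid_def transport[OF F(2)] .
qed

section \<open>Maximum-likelihood decoding\<close>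

lemma ml_decoder_less:
  assumes "M \<ge> 1"
  shows "ml_decoder n s M c y < M"
proof -
  define S where "S = (\<lambda>j. gauss_pdf n (c j) s y) ` {..<M}"
  have S: "finite S" "S \<noteq> {}" using assms by (auto simp: S_def lessThan_empty_iff)
  obtain i where i: "i < M" "gauss_pdf n (c i) s y = Max S"
    using Max_in[OF S] by (auto simp: S_def)
  have "\<forall>j<M. gauss_pdf n (c j) s y \<le> gauss_pdf n (c i) s y"
    using i(2) Max_ge[OF S(1)] by (auto simp: S_def)
  then have "\<exists>i. i < M \<and> (\<forall>j<M. gauss_pdf n (c j) s y \<le> gauss_pdf n (c i) s y)"
    using i(1) by blast
  from LeastI_ex[OF this] show ?thesis
    unfolding ml_decoder_def by blast
qed

lemma measurable_ml_decoder[measurable]: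
  "ml_decoder n s M c \<in> lborel_Pi n \<rightarrow>\<^sub>M count_space UNIV"
  unfolding ml_decoder_def[abs_def]
proof (rule measurable_Least)
  fix i
  have "Measurable.pred (lborel_Pi n) (\<lambda>y. gauss_pdf n (c j) s y \<le> gauss_pdf n (c i) s y)" for j
    unfolding pred_def by (rule borel_measurable_le) (rule gauss_pdf_measurable)+
  then show "Measurable.pred (lborel_Pi n)
      (\<lambda>y. i < M \<and> (\<forall>j<M. gauss_pdf n (c j) s y \<le> gauss_pdf n (c i) s y))"
    by (intro pred_intros_conj1' pred_intros_countable(1) pred_intros_imp')
qed

lemma sum_measure_ml_decoder_regions:
  assumes "prob_space Q" and sets_Q: "sets Q = sets (lborel_Pi n)" and "M \<ge> 1"
  shows "(\<Sum>i<M. measure Q {y \<in> space Q. ml_decoder n s M c y = i}) = 1"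
proof -
  interpret prob_space Q by fact
  have [measurable]: "ml_decoder n s M c \<in> Q \<rightarrow>\<^sub>M count_space UNIV"
    by (subst measurable_cong_sets[OF sets_Q refl]) (rule measurable_ml_decoder)
  have "(\<Sum>i<M. prob {y \<in> space Q. ml_decoder n s M c y = i}) =
      prob (\<Union>i<M. {y \<in> space Q. ml_decoder n s M c y = i})"
    by (intro finite_measure_finite_Union[symmetric]) (auto simp: disjoint_family_on_def)
  also have "(\<Union>i<M. {y \<in> space Q. ml_decoder n s M c y = i}) = space Q"
    using ml_decoder_less[OF \<open>M \<ge> 1\<close>] by auto
  finally show ?thesis by (simp add: prob_space)
qed

lemma nonpos_if_bounded_above_on_nonneg:
  fixes a C B :: real
  assumes "\<And>t. 0 \<le> t \<Longrightarrow> a * t - C \<le> B"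
  shows "a \<le> 0"
proof (rule ccontr)
  assume "\<not> a \<le> 0"
  define t where "t = max 0 ((B + C + 1) / a)"
  have "(B + C + 1) / a \<le> t" by (simp add: t_def)
  then have "B + C + 1 \<le> t * a" using \<open>\<not> a \<le> 0\<close> by (simp add: pos_divide_le_eq)
  moreover have "a * t - C \<le> B" by (rule assms) (simp add: t_def)
  ultimately show False by (simp add: mult.commute)
qed

lemma affine_minorant_average:
  fixes \<beta> \<gamma> \<epsilon> :: "nat \<Rightarrow> real"
  assumes "M \<ge> 1" and "a\<^sub>2 \<le> 0" and "(\<Sum>i<M. \<beta> i) = 1" and "(\<Sum>i<M. \<gamma> i) \<le> real M * \<Upsilon>"
    and minorant: "\<And>i. i < M \<Longrightarrow> a\<^sub>1 * \<beta> i + a\<^sub>2 * \<gamma> i - C \<le> \<epsilon> i"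
  shows "a\<^sub>1 * (1 / real M) + a\<^sub>2 * \<Upsilon> - C \<le> (1 / real M) * (\<Sum>i<M. \<epsilon> i)"
proof -
  have "a\<^sub>1 + a\<^sub>2 * (\<Sum>i<M. \<gamma> i) - real M * C = (\<Sum>i<M. a\<^sub>1 * \<beta> i + a\<^sub>2 * \<gamma> i - C)"
    using assms(3) by (simp add: sum.distrib sum_subtractf sum_distrib_left[symmetric])
  also have "\<dots> \<le> (\<Sum>i<M. \<epsilon> i)"
    using minorant by (intro sum_mono) auto
  finally have "a\<^sub>1 + a\<^sub>2 * (real M * \<Upsilon>) - real M * C \<le> (\<Sum>i<M. \<epsilon> i)"
    using mult_left_mono_neg[OF assms(4) assms(2)] by linarith
  moreover have "a\<^sub>1 * (1 / real M) + a\<^sub>2 * \<Upsilon> - C = (1 / real M) * (a\<^sub>1 + a\<^sub>2 * (real M * \<Upsilon>) - real M * C)"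
    using assms(1) by (simp add: field_simps)
  ultimately show ?thesis
    by (simp add: divide_right_mono)
qed

lemma awgn_Pe_ge_affine_minorant:
  fixes c :: "nat \<Rightarrow> nat \<Rightarrow> real"
  assumes "\<sigma> > 0" and "\<theta> > 0" and "n \<ge> 1" and "M \<ge> 1"
    and minorant: "\<And>\<beta> \<gamma>. 0 \<le> \<beta> \<Longrightarrow> \<beta> \<le> 1 \<Longrightarrow> 0 \<le> \<gamma> \<Longrightarrow>
        a\<^sub>1 * \<beta> + a\<^sub>2 * \<gamma> - C \<le> alpha_beta \<beta> (gauss_iid n (sqrt \<gamma>) \<sigma>) (gauss_iid n 0 \<theta>)"
    and power: "(1 / real M) * (\<Sum>i<M. \<Sum>k<n. (c i k)\<^sup>2) \<le> real n * \<Upsilon>"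
  shows "a\<^sub>1 * (1 / real M) + a\<^sub>2 * \<Upsilon> - C \<le> awgn_Pe n \<sigma> M c"
proof -
  define E where "E i = {y \<in> space (lborel_Pi n). ml_decoder n \<sigma> M c y = i}" for i
  define \<beta> where "\<beta> i = measure (gauss_iid n 0 \<theta>) (E i)" for i
  define \<gamma> where "\<gamma> i = (\<Sum>k<n. (c i k)\<^sup>2) / real n" for i
  define \<epsilon> where "\<epsilon> i = 1 - measure (gauss_vec n (c i) \<sigma>) (E i)" for i
  have E[measurable]: "E i \<in> sets (lborel_Pi n)" for i
    unfolding E_def by measurable
  have Q: "prob_space (gauss_iid n 0 \<theta>)"
    unfolding gauss_iid_def using prob_space_gauss_vec[OF \<open>\<theta> > 0\<close>] .
  have "a\<^sub>2 * t - C \<le> 1" if "0 \<le> t" for t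
  proof -
    have "a\<^sub>2 * t - C \<le> alpha_beta 0 (gauss_iid n (sqrt t) \<sigma>) (gauss_iid n 0 \<theta>)"
      using minorant[of 0 t] that by simp
    also have "\<dots> \<le> 1"
      using alpha_beta_le_1[OF prob_space_gauss_vec[OF \<open>\<sigma> > 0\<close>]] by (simp add: gauss_iid_def)
    finally show ?thesis .
  qed
  then have "a\<^sub>2 \<le> 0" by (rule nonpos_if_bounded_above_on_nonneg)
  have "\<gamma> i \<ge> 0" for i
    unfolding \<gamma>_def by (simp add: sum_nonneg)
  moreover have "0 \<le> \<beta> i" "\<beta> i \<le> 1" for i
    unfolding \<beta>_def using prob_space.prob_le_1[OF Q] by simp_all
  moreover have "(\<Sum>k<n. (c i k)\<^sup>2) = real n * \<gamma> i" for i
    using \<open>n \<ge> 1\<close> by (simp add: \<gamma>_def)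
  ultimately have "a\<^sub>1 * \<beta> i + a\<^sub>2 * \<gamma> i - C \<le> \<epsilon> i" for i
    using minorant alpha_beta_gauss_iid_le[OF \<open>\<sigma> > 0\<close> \<open>n \<ge> 1\<close> _ _ E] unfolding \<beta>_def \<epsilon>_def
    by (meson order_trans)
  moreover have "(\<Sum>i<M. \<beta> i) = 1"
    unfolding \<beta>_def E_def gauss_iid_def
    using sum_measure_ml_decoder_regions[OF Q[unfolded gauss_iid_def] _ \<open>M \<ge> 1\<close>] by simp
  moreover have "(\<Sum>i<M. \<gamma> i) \<le> real M * \<Upsilon>"
    using power \<open>n \<ge> 1\<close> \<open>M \<ge> 1\<close> by (simp add: \<gamma>_def sum_divide_distrib[symmetric] field_simps)
  moreover have "awgn_Pe n \<sigma> M c = (1 / real M) * (\<Sum>i<M. \<epsilon> i)"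
  proof -
    have "measure (gauss_vec n (c i) \<sigma>) {y \<in> space (gauss_vec n (c i) \<sigma>). ml_decoder n \<sigma> M c y \<noteq> i} = \<epsilon> i"
      for i
    proof -
      have "{y \<in> space (gauss_vec n (c i) \<sigma>). ml_decoder n \<sigma> M c y \<noteq> i} = space (gauss_vec n (c i) \<sigma>) - E i"
        by (auto simp: E_def)
      then show ?thesis
        using prob_space.prob_compl[OF prob_space_gauss_vec[OF \<open>\<sigma> > 0\<close>]] by (simp add: \<epsilon>_def)
    qed
    then show ?thesis by (simp add: awgn_Pe_def)
  qed
  ultimately show ?thesis
    using affine_minorant_average[OF \<open>M \<ge> 1\<close> \<open>a\<^sub>2 \<le> 0\<close>, of \<beta> \<gamma> \<Upsilon> a\<^sub>1 C \<epsilon>] by simp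
qed

section \<open>The lower convex envelope\<close>

lemma lower_convex_env_le_affine_minorants:
  assumes "D \<noteq> {}"
    and minorant: "\<And>a C. (\<forall>y\<in>D. fst a * fst y + snd a * snd y - C \<le> f y) \<Longrightarrow>
        fst a * fst x + snd a * snd x - C \<le> b"
  shows "lower_convex_env f D x \<le> ereal b"
  unfolding lower_convex_env_def
proof (rule SUP_least)
  fix a :: "real \<times> real"
  obtain y where "y \<in> D" using assms(1) by blast
  then have "ereal (fst a * fst y + snd a * snd y) - ereal (f y) \<le> conj2 f D a"
    unfolding conj2_def by (rule SUP_upper)
  then have "conj2 f D a \<noteq> -\<infinity>" by auto
  then show "ereal (fst a * fst x + snd a * snd x) - conj2 f D a \<le> ereal b"
  proof (cases "conj2 f D a")
    case (real C)
    have "fst a * fst y + snd a * snd y - C \<le> f y" if "y \<in> D" for y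
    proof -
      have "ereal (fst a * fst y + snd a * snd y) - ereal (f y) \<le> conj2 f D a"
        unfolding conj2_def using that by (rule SUP_upper)
      then show ?thesis using real by simp
    qed
    then show ?thesis using minorant real by simp
  qed simp_all
qed

lemma ereal_le_Inf:
  fixes S :: "real set"
  assumes "S \<noteq> {}" and "\<And>x. x \<in> S \<Longrightarrow> L \<le> ereal x"
  shows "L \<le> ereal (Inf S)"
proof (cases L)
  case (real r)
  then have "r \<le> Inf S" using assms by (intro cInf_greatest) auto
  then show ?thesis using real by simp
next
  case PInf
  obtain x where "x \<in> S" using assms(1) by blast
  then show ?thesis using assms(2) PInf by fastforce
qed simp

theorem theorem4:
  fixes \<theta> \<sigma> \<Upsilon> :: real and n M :: nat
  assumes "\<theta> \<ge> \<sigma>" and "\<sigma> > 0" and "n \<ge> 1" and "M \<ge> 1" and "\<Upsilon> > 0"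
  shows "ereal (eps_a_star \<sigma> n M \<Upsilon>) \<ge>
    lower_convex_env
      (\<lambda>(\<beta>, \<gamma>). alpha_beta \<beta> (gauss_iid n (sqrt \<gamma>) \<sigma>) (gauss_iid n 0 \<theta>))
      ({0..1} \<times> {0..}) (1 / real M, \<Upsilon>)"
    (is "_ \<ge> lower_convex_env ?f ?D ?x")
proof -
  have "\<theta> > 0" \<comment> \<open>the only use of \<open>\<theta> \<ge> \<sigma>\<close>\<close>
    using assms by linarith
  have "lower_convex_env ?f ?D ?x \<le> ereal (awgn_Pe n \<sigma> M c)"
    if power: "(1 / real M) * (\<Sum>i<M. \<Sum>k<n. (c i k)\<^sup>2) \<le> real n * \<Upsilon>" for c
    using awgn_Pe_ge_affine_minorant[OF \<open>\<sigma> > 0\<close> \<open>\<theta> > 0\<close> \<open>n \<ge> 1\<close> \<open>M \<ge> 1\<close> _ power]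
    by (intro lower_convex_env_le_affine_minorants) auto
  moreover have "awgn_Pe n \<sigma> M (\<lambda>_ _. 0) \<in>
      {awgn_Pe n \<sigma> M c | c. (1 / real M) * (\<Sum>i<M. \<Sum>k<n. (c i k)\<^sup>2) \<le> real n * \<Upsilon>}"
    using \<open>\<Upsilon> > 0\<close> by auto
  ultimately show ?thesis
    unfolding eps_a_star_def by (intro ereal_le_Inf) blast+
qed
end
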